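(* Let $G=(V,E)$ be an arbitrary graph with capacities $b_v\ge0$, demands $d_{u,e},d_{v,e}\ge0$ and profits $p_e\ge0$ for each edge $e=uv$, such that the instance has a consistent ordering of edges and $d_{v,e}\le b_v$ for all $v$ and $e\in\delta(v)$. Let $M'\subseteq E$ satisfy $\sum_{e\in\delta_{M'}(v)\setminus L(v)}d_{v,e}\le b_v$ for every $v\in V$, where $L(v)$ is a set of the two edges of $\delta_{M'}(v)$ with highest $d_{v,e}$ (or $L(v)=\delta_{M'}(v)$ if $|\delta_{M'}(v)|\le1$). Then one can find $M\subseteq M'$ with $\sum_{e\in\delta_M(v)}d_{v,e}\le b_v$ for all $v\in V$ and $p(M)\ge\frac{p(M')}{5}$.
   Context: A consistent ordering of edges is a linear order of $E$ whose restriction to each $\delta(v)$ lists the edges in nondecreasing order of $d_{v,e}$. $\delta(v)$ is the set of edges incident to $v$, $\delta_{M'}(v)=\delta(v)\cap M'$, $p(M)=\sum_{e\in M}p_e$. *)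

theory Defs
  imports Complex_Main
begin

text \<open>A graph is given by a finite vertex set V, a finite edge set E (edges are abstract
objects, so parallel edges are allowed) and a map ends giving the two endpoints of each edge.\<close>

definition graph :: "'v set \<Rightarrow> 'e set \<Rightarrow> ('e \<Rightarrow> 'v set) \<Rightarrow> bool" where
  "graph V E ends \<longleftrightarrow> finite V \<and> finite E \<and> (\<forall>e\<in>E. ends e \<subseteq> V \<and> card (ends e) = 2)"

definition delta :: "('e \<Rightarrow> 'v set) \<Rightarrow> 'e set \<Rightarrow> 'v \<Rightarrow> 'e set" where
  "delta ends F v = {e\<in>F. v \<in> ends e}"

definition consistent_ordering ::
  "'v set \<Rightarrow> 'e set \<Rightarrow> ('e \<Rightarrow> 'v set) \<Rightarrow> ('v \<Rightarrow> 'e \<Rightarrow> real) \<Rightarrow> 'e rel \<Rightarrow> bool" where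
  "consistent_ordering V E ends d R \<longleftrightarrow>
     linear_order_on E R \<and>
     (\<forall>v\<in>V. \<forall>e\<in>delta ends E v. \<forall>f\<in>delta ends E v. (e, f) \<in> R \<longrightarrow> d v e \<le> d v f)"

definition has_consistent_ordering ::
  "'v set \<Rightarrow> 'e set \<Rightarrow> ('e \<Rightarrow> 'v set) \<Rightarrow> ('v \<Rightarrow> 'e \<Rightarrow> real) \<Rightarrow> bool" where
  "has_consistent_ordering V E ends d \<longleftrightarrow> (\<exists>R. consistent_ordering V E ends d R)"

definition top_two :: "('e \<Rightarrow> 'v set) \<Rightarrow> ('v \<Rightarrow> 'e \<Rightarrow> real) \<Rightarrow> 'e set \<Rightarrow> 'v \<Rightarrow> 'e set \<Rightarrow> bool" where
  "top_two ends d M' v L \<longleftrightarrow>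
     L \<subseteq> delta ends M' v \<and> card L = min 2 (card (delta ends M' v)) \<and>
     (\<forall>e\<in>L. \<forall>f\<in>delta ends M' v - L. d v f \<le> d v e)"

end

theory Submission
  imports Defs
begin

text \<open>
  Fix a consistent ordering R and let K v be the R-largest min 2 (card (delta ends M' v)) edges
  at v. Since R sorts delta v by d v, exchanging L v for K v does not increase the load outside,
  so the edges of M' - K v at v still fit into b v. Now colour M' with five colours so that
  every edge of K v has a colour of its own among the edges at v. Greedily, colouring the edges
  from the R-largest down, an edge f only has to avoid the colours of the at most four edges of
  K u \<union> K w for its endpoints u, w: if f \<in> K v, then every edge after f at v lies in K v.
  In each colour class a vertex v then meets either a single edge (of load at most b v) or only
  edges outside K v, so every class is feasible, and one of them carries a fifth of p(M').
\<close>

lemma linear_order_on_finite_has_least: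
  assumes "linear_order_on E R" "finite F" "F \<noteq> {}" "F \<subseteq> E"
  shows "\<exists>m\<in>F. \<forall>g\<in>F. (m, g) \<in> R"
  using assms(2-4)
proof (induction F rule: finite_ne_induct)
  case (singleton x)
  then show ?case using assms(1) by (auto simp: order_on_defs refl_on_def)
next
  case (insert x F)
  then obtain m where m: "m \<in> F" "\<forall>g\<in>F. (m, g) \<in> R" by auto
  have refl: "(x, x) \<in> R" and trans: "trans R"
    using assms(1) insert.prems by (auto simp: order_on_defs refl_on_def)
  have "(x, m) \<in> R \<or> (m, x) \<in> R"
    using assms(1) insert.prems m(1) refl
    by (cases "x = m") (auto simp: order_on_defs total_on_def)
  then show ?case
    using m refl trans by (auto dest: transD)
qed

definition upper_set_in :: "'a rel \<Rightarrow> 'a set \<Rightarrow> 'a set \<Rightarrow> bool" where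
  "upper_set_in R S K \<longleftrightarrow> K \<subseteq> S \<and> (\<forall>x\<in>K. \<forall>y\<in>S. (x, y) \<in> R \<longrightarrow> y \<in> K)"

lemma upper_set_in_of_card:
  assumes "linear_order_on E R" "finite S" "S \<subseteq> E" "k \<le> card S"
  shows "\<exists>K. upper_set_in R S K \<and> card K = k"
  using assms(4)
proof (induction "card S - k" arbitrary: k)
  case 0
  then show ?case by (intro exI[of _ S]) (auto simp: upper_set_in_def)
next
  case (Suc n)
  then have "n = card S - Suc k" "Suc k \<le> card S" by arith+
  then obtain K where K: "upper_set_in R S K" "card K = Suc k" using Suc.hyps(1) by blast
  have "finite K" "K \<subseteq> E"
    using K(1) assms(2,3) finite_subset by (auto simp: upper_set_in_def)
  moreover have "K \<noteq> {}" using K(2) by auto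
  ultimately obtain m where m: "m \<in> K" "\<forall>g\<in>K. (m, g) \<in> R"
    using linear_order_on_finite_has_least[OF assms(1)] by blast
  have "upper_set_in R S (K - {m})"
  proof -
    have "y \<noteq> m" if "x \<in> K - {m}" "(x, y) \<in> R" for x y
      using that m assms(1) by (auto simp: order_on_defs antisym_def)
    then show ?thesis using K(1) by (auto simp: upper_set_in_def)
  qed
  moreover have "card (K - {m}) = k" using K(2) m(1) by simp
  ultimately show ?case by blast
qed

lemma upper_set_in_above_complement:
  assumes "linear_order_on E R" "S \<subseteq> E" "upper_set_in R S K" "x \<in> K" "y \<in> S - K"
  shows "(y, x) \<in> R"
proof -
  have "x \<noteq> y" "x \<in> E" "y \<in> E" using assms(2-5) by (auto simp: upper_set_in_def)
  then have "(x, y) \<in> R \<or> (y, x) \<in> R"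
    using assms(1) by (auto simp: order_on_defs total_on_def)
  then show ?thesis using assms(3-5) by (auto simp: upper_set_in_def)
qed

lemma upper_sets_at_vertices_of_card:
  assumes "linear_order_on E R" "finite M" "M \<subseteq> E"
  shows "\<exists>K. \<forall>v. upper_set_in R (delta ends M v) (K v) \<and> card (K v) = min k (card (delta ends M v))"
proof -
  have "\<exists>K. upper_set_in R (delta ends M v) K \<and> card K = min k (card (delta ends M v))" for v
  proof -
    have "finite (delta ends M v)" "delta ends M v \<subseteq> E"
      using assms(2,3) by (auto simp: delta_def)
    then show ?thesis by (intro upper_set_in_of_card[OF assms(1)]) simp_all
  qed
  then show ?thesis by metis
qed

lemma card_Diff_swap_le:
  assumes "finite A" "finite B" "card B \<le> card A"
  shows "card (B - A) \<le> card (A - B)"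
  using assms by (simp add: card_Diff_subset_Int Int_commute)

lemma sum_diff_top_le:
  fixes d :: "'a \<Rightarrow> real"
  assumes "finite S" "A \<subseteq> S" "B \<subseteq> S" "card B \<le> card A"
    and top: "\<forall>x\<in>A. \<forall>y\<in>S - A. d y \<le> d x" and nonneg: "\<forall>x\<in>S. 0 \<le> d x"
  shows "sum d (S - A) \<le> sum d (S - B)"
proof -
  have fin: "finite A" "finite B" using assms(1-3) finite_subset by auto
  have card: "card (B - A) \<le> card (A - B)"
    using card_Diff_swap_le[OF fin assms(4)] .
  have exchange: "sum d (B - A) \<le> sum d (A - B)"
  proof (cases "A - B = {}")
    case True
    then have "card (B - A) = 0" using card by (metis card.empty le_zero_eq)
    then have "B - A = {}" using fin by simp
    then show ?thesis using True by simp
  next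
    case False
    define c where "c = Min (d ` (A - B))"
    have "c \<in> d ` (A - B)" unfolding c_def using False fin by simp
    then have "0 \<le> c" using nonneg assms(2) by auto
    have "sum d (B - A) \<le> card (B - A) * c"
      using sum_bounded_above[of "B - A" d c] top fin False assms(3)
      unfolding c_def by (force intro: Min.boundedI)
    also have "\<dots> \<le> card (A - B) * c"
      using card \<open>0 \<le> c\<close> by (simp add: mult_right_mono)
    also have "\<dots> \<le> sum d (A - B)"
      using sum_bounded_below[of "A - B" c d] fin unfolding c_def by simp
    finally show ?thesis .
  qed
  have "S - A - (B - A) = S - A - B" "S - B - (A - B) = S - A - B" by blast+
  then have "sum d (S - A) = sum d (S - A - B) + sum d (B - A)"
    and "sum d (S - B) = sum d (S - A - B) + sum d (A - B)"
    using sum.subset_diff[of "B - A" "S - A" d] sum.subset_diff[of "A - B" "S - B" d] assms(1-3)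
    by auto
  then show ?thesis using exchange by linarith
qed

definition isolating_colouring ::
  "('e \<Rightarrow> 'v set) \<Rightarrow> ('v \<Rightarrow> 'e set) \<Rightarrow> 'e set \<Rightarrow> ('e \<Rightarrow> nat) \<Rightarrow> bool" where
  "isolating_colouring ends K F c \<longleftrightarrow>
     (\<forall>v. \<forall>e\<in>K v \<inter> F. \<forall>g\<in>delta ends F v - {e}. c g \<noteq> c e)"

lemma isolating_colouring_insert_least:
  assumes iso: "isolating_colouring ends K (F - {f}) c"
    and up: "\<forall>v. upper_set_in R (delta ends M v) (K v)"
    and "F \<subseteq> M" "f \<in> F" and least: "\<forall>g\<in>F. (f, g) \<in> R"
    and fresh: "k \<notin> c ` (\<Union>v\<in>ends f. K v)"
  shows "isolating_colouring ends K F (c(f := k))"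
  unfolding isolating_colouring_def
proof (intro allI ballI)
  fix v e g
  assume e: "e \<in> K v \<inter> F" and g: "g \<in> delta ends F v - {e}"
  have g_at_v: "g \<in> delta ends M v" using g \<open>F \<subseteq> M\<close> by (auto simp: delta_def)
  consider "e = f" | "g = f" | "e \<noteq> f" "g \<noteq> f" by blast
  then show "(c(f := k)) g \<noteq> (c(f := k)) e"
  proof cases
    case 1
    then have "g \<in> K v" "v \<in> ends f"
      using up e g_at_v least g by (auto simp: upper_set_in_def delta_def)
    then show ?thesis using 1 g fresh by auto
  next
    case 2
    then have "v \<in> ends f" using g by (auto simp: delta_def)
    then show ?thesis using 2 e g fresh by auto
  next
    case 3
    then show ?thesis using iso e g by (auto simp: isolating_colouring_def delta_def)
  qed
qed

lemma isolating_colouring_exists: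
  assumes "linear_order_on E R" "finite M" "M \<subseteq> E"
    and ends: "\<forall>e\<in>M. card (ends e) = 2"
    and K: "\<forall>v. upper_set_in R (delta ends M v) (K v) \<and> card (K v) \<le> 2"
  shows "\<exists>c. (\<forall>e\<in>M. c e < 5) \<and> isolating_colouring ends K M c"
  using assms(2)
proof (induction M rule: finite_remove_induct)
  case empty
  show ?case by (auto simp: isolating_colouring_def delta_def)
next
  case (remove F)
  have "F \<subseteq> E" using remove.hyps(3) assms(3) by blast
  then obtain f where f: "f \<in> F" "\<forall>g\<in>F. (f, g) \<in> R"
    using linear_order_on_finite_has_least[OF assms(1) remove.hyps(1,2)] by blast
  obtain c where c: "\<forall>e\<in>F - {f}. c e < 5" "isolating_colouring ends K (F - {f}) c"
    using remove.IH[OF f(1)] by blast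
  define N where "N = (\<Union>v\<in>ends f. K v)"
  have ends_f: "finite (ends f)" "card (ends f) = 2"
    using ends f(1) remove.hyps(3) by (metis card.infinite subsetD zero_neq_numeral)+
  have "finite (K v)" for v
  proof (rule finite_subset)
    show "K v \<subseteq> M" using K by (auto simp: upper_set_in_def delta_def)
  qed (rule assms(2))
  then have "finite N" using ends_f by (simp add: N_def)
  have "card N \<le> (\<Sum>v\<in>ends f. card (K v))" unfolding N_def by (rule card_UN_le[OF ends_f(1)])
  also have "\<dots> \<le> 4" using sum_mono[of "ends f" "\<lambda>v. card (K v)" "\<lambda>_. 2"] K ends_f by simp
  finally have "card (c ` N) < card {..<5::nat}"
    using card_image_le[OF \<open>finite N\<close>, of c] by simp
  then obtain k where k: "k < 5" "k \<notin> c ` N"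
    by (metis lessThan_iff card_mono finite_imageI[OF \<open>finite N\<close>] not_le subsetI)
  have "isolating_colouring ends K F (c(f := k))"
    using isolating_colouring_insert_least[OF c(2) _ remove.hyps(3) f] K k(2) by (simp add: N_def)
  moreover have "\<forall>e\<in>F. (c(f := k)) e < 5" using c(1) k(1) by simp
  ultimately show ?case by blast
qed

lemma isolating_colouring_class_load_le:
  fixes d :: "'e \<Rightarrow> real"
  assumes iso: "isolating_colouring ends K M c" and "finite M" "K v \<subseteq> delta ends M v"
    and bounds: "\<forall>e\<in>delta ends M v. 0 \<le> d e \<and> d e \<le> B"
    and rest: "sum d (delta ends M v - K v) \<le> B"
  shows "sum d (delta ends {e\<in>M. c e = j} v) \<le> B"
proof (cases "K v \<inter> {e\<in>M. c e = j} = {}")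
  case True
  then have "delta ends {e\<in>M. c e = j} v \<subseteq> delta ends M v - K v"
    by (auto simp: delta_def)
  then have "sum d (delta ends {e\<in>M. c e = j} v) \<le> sum d (delta ends M v - K v)"
    using bounds \<open>finite M\<close> by (intro sum_mono2) (auto simp: delta_def)
  then show ?thesis using rest by linarith
next
  case False
  then obtain e where e: "e \<in> K v" "e \<in> M" "c e = j" by blast
  then have "delta ends {e\<in>M. c e = j} v = {e}"
    using iso assms(3) by (auto simp: isolating_colouring_def delta_def)
  then show ?thesis using bounds e assms(3) by auto
qed

lemma exists_colour_class_sum_ge:
  fixes p :: "'e \<Rightarrow> real" and c :: "'e \<Rightarrow> nat"
  assumes "finite M" "\<forall>e\<in>M. c e < n" "0 < n"
  shows "\<exists>j<n. sum p M / n \<le> sum p {e\<in>M. c e = j}"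
proof (rule ccontr)
  assume "\<not> ?thesis"
  then have "(\<Sum>j<n. sum p {e\<in>M. c e = j}) < (\<Sum>j<n. sum p M / n)"
    using assms(3) by (intro sum_strict_mono) auto
  also have "\<dots> = sum p M" using assms(3) by simp
  also have "sum p M = (\<Sum>j<n. sum p {e\<in>M. c e = j})"
    using sum.group[OF assms(1), of "{..<n}" c p] assms(2) by (auto simp: image_subset_iff)
  finally show False by simp
qed

lemma sum_diff_upper_set_le_sum_diff_top_two:
  assumes "consistent_ordering V E ends d R" "v \<in> V" "finite M" "M \<subseteq> E"
    and L: "top_two ends d M v L"
    and K: "upper_set_in R (delta ends M v) K" "card L \<le> card K"
    and nonneg: "\<forall>e\<in>delta ends M v. 0 \<le> d v e"
  shows "sum (d v) (delta ends M v - K) \<le> sum (d v) (delta ends M v - L)"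
proof (rule sum_diff_top_le)
  have lin: "linear_order_on E R" and consistent:
    "\<forall>e\<in>delta ends E v. \<forall>f\<in>delta ends E v. (e, f) \<in> R \<longrightarrow> d v e \<le> d v f"
    using assms(1,2) by (auto simp: consistent_ordering_def)
  have sub: "delta ends M v \<subseteq> delta ends E v" using assms(4) by (auto simp: delta_def)
  show "\<forall>x\<in>K. \<forall>y\<in>delta ends M v - K. d v y \<le> d v x"
  proof (intro ballI)
    fix x y assume "x \<in> K" "y \<in> delta ends M v - K"
    moreover have "delta ends M v \<subseteq> E" using assms(4) by (auto simp: delta_def)
    ultimately have "(y, x) \<in> R" using upper_set_in_above_complement[OF lin _ K(1)] by blast
    then show "d v y \<le> d v x"
      using consistent sub K(1) \<open>x \<in> K\<close> \<open>y \<in> _\<close> by (auto simp: upper_set_in_def)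
  qed
qed (use assms(3) K L nonneg in \<open>auto simp: top_two_def upper_set_in_def delta_def\<close>)

theorem lemma7:
  fixes V :: "'v set" and E :: "'e set" and ends :: "'e \<Rightarrow> 'v set"
    and b :: "'v \<Rightarrow> real" and d :: "'v \<Rightarrow> 'e \<Rightarrow> real" and p :: "'e \<Rightarrow> real"
    and M' :: "'e set" and L :: "'v \<Rightarrow> 'e set"
  assumes "graph V E ends"
    and "\<forall>v\<in>V. b v \<ge> 0"
    and "\<forall>e\<in>E. \<forall>v\<in>ends e. d v e \<ge> 0"
    and "\<forall>e\<in>E. p e \<ge> 0"
    and "has_consistent_ordering V E ends d"
    and "\<forall>v\<in>V. \<forall>e\<in>delta ends E v. d v e \<le> b v"
    and "M' \<subseteq> E"
    and "\<forall>v\<in>V. top_two ends d M' v (L v)"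
    and "\<forall>v\<in>V. (\<Sum>e\<in>delta ends M' v - L v. d v e) \<le> b v"
  shows "\<exists>M\<subseteq>M'. (\<forall>v\<in>V. (\<Sum>e\<in>delta ends M v. d v e) \<le> b v) \<and>
                   (\<Sum>e\<in>M. p e) \<ge> (\<Sum>e\<in>M'. p e) / 5"
proof -
  have fin: "finite M'" and ends: "\<forall>e\<in>M'. card (ends e) = 2"
    using assms(1,7) finite_subset by (auto simp: graph_def)
  obtain R where R: "consistent_ordering V E ends d R"
    using assms(5) by (auto simp: has_consistent_ordering_def)
  then have lin: "linear_order_on E R" by (simp add: consistent_ordering_def)
  obtain K where K: "\<forall>v. upper_set_in R (delta ends M' v) (K v) \<and>
      card (K v) = min 2 (card (delta ends M' v))"
    using upper_sets_at_vertices_of_card[OF lin fin assms(7), of ends 2] by blast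
  obtain c where c: "\<forall>e\<in>M'. c e < 5" "isolating_colouring ends K M' c"
    using isolating_colouring_exists[OF lin fin assms(7) ends] K by fastforce
  obtain j where j: "sum p M' / 5 \<le> sum p {e\<in>M'. c e = j}"
    using exists_colour_class_sum_ge[OF fin c(1)] by auto
  have "sum (d v) (delta ends {e\<in>M'. c e = j} v) \<le> b v" if "v \<in> V" for v
  proof (rule isolating_colouring_class_load_le[OF c(2) fin])
    show "K v \<subseteq> delta ends M' v" using K by (simp add: upper_set_in_def)
    show bounds: "\<forall>e\<in>delta ends M' v. 0 \<le> d v e \<and> d v e \<le> b v"
      using assms(3,6,7) \<open>v \<in> V\<close> by (auto simp: delta_def)
    have "card (L v) \<le> card (K v)" using K assms(8) \<open>v \<in> V\<close> by (simp add: top_two_def)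
    then have "sum (d v) (delta ends M' v - K v) \<le> sum (d v) (delta ends M' v - L v)"
      using sum_diff_upper_set_le_sum_diff_top_two[OF R \<open>v \<in> V\<close> fin assms(7)] assms(8) K bounds
        \<open>v \<in> V\<close> by blast
    then show "sum (d v) (delta ends M' v - K v) \<le> b v" using assms(9) \<open>v \<in> V\<close> by fastforce
  qed
  then show ?thesis using j by (intro exI[of _ "{e\<in>M'. c e = j}"]) auto
qed

end
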